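(* Let $\{\gamma_k\}$ and $\{\lambda_k\}$ be positive non-increasing sequences, let $r<1$, and let $\{\bar x_N\}$ be generated by the IR-IG method. Let $M_h,M$ be scalars with $|h(x)|\le M_h$ and $\|x\|\le M$ for all $x\in X$. Then for all $N\ge1$, $$f(\bar x_N)-f^*\le\Big(\sum_{k=0}^{N-1}\gamma_k^r\Big)^{-1}\Big(m\sum_{k=0}^{N-1}\gamma_k^{r+1}(C_f^2+\lambda_k^2C_h^2)+m^2C_f\sum_{k=0}^{N-1}\gamma_k^{r+1}(C_f+\lambda_kC_h)+2M_h\sum_{k=0}^{N-1}\gamma_k^r\lambda_k+2M^2\gamma_{N-1}^{r-1}\Big).$$
   Context: Standing setup: $X\subset\mathbb{R}^n$ is nonempty, compact and convex. $f_1,\dots,f_m:\mathbb{R}^n\to\mathbb{R}$ are convex (possibly nondifferentiable) functions and $f=\sum_{i=1}^m f_i$. $h:\mathbb{R}^n\to\mathbb{R}$ is strongly convex with parameter $\mu_h>0$ (possibly nondifferentiable). Let $f^*=\min_{x\in X}f(x)$. $C_f,C_h$ are constants such that $\|g\|\le C_f$ for every $g\in\partial f_i(x)$, $i=1,\dots,m$, $x\in X$, and $\|g\|\le C_h$ for every $g\in\partial h(x)$, $x\in X$. $\mathcal{P}_X$ denotes Euclidean projection onto $X$. IR-IG method: given $x_0\in X$, positive sequences $\{\gamma_k\}$, $\{\lambda_k\}$ and a constant $r<1$, for each $k\ge0$ set $x_{k,0}=x_k$; for $i=0,\dots,m-1$ pick any $g_{f_{i+1}}(x_{k,i})\in\partial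 f_{i+1}(x_{k,i})$ and $g_h(x_{k,i})\in\partial h(x_{k,i})$ and set $x_{k,i+1}=\mathcal{P}_X\big(x_{k,i}-\gamma_k\big(g_{f_{i+1}}(x_{k,i})+\tfrac{\lambda_k}{m}g_h(x_{k,i})\big)\big)$; then set $x_{k+1}=x_{k,m}$. The averaged iterates are $\bar x_N=\sum_{k=0}^{N-1}\gamma_k^r x_k\big/\sum_{k=0}^{N-1}\gamma_k^r$ for $N\ge1$. *)

theory Defs
  imports "HOL-Analysis.Analysis"
begin

definition subdiff :: "('a::real_inner \<Rightarrow> real) \<Rightarrow> 'a \<Rightarrow> 'a set" where
  "subdiff f x = {g. \<forall>y. f y \<ge> f x + inner g (y - x)}"

definition strongly_convex :: "real \<Rightarrow> ('a::real_normed_vector \<Rightarrow> real) \<Rightarrow> bool" where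
  "strongly_convex mu h \<longleftrightarrow> (\<forall>x y t. 0 \<le> t \<and> t \<le> 1 \<longrightarrow>
     h (t *\<^sub>R x + (1 - t) *\<^sub>R y) \<le> t * h x + (1 - t) * h y - mu / 2 * t * (1 - t) * (norm (x - y))\<^sup>2)"

end

theory Submission
  imports Defs
begin

text \<open>
  One inner pass of the method moves the iterate by at most \<open>m \<gamma>\<^sub>k (C\<^sub>f + \<lambda>\<^sub>k C\<^sub>h / m)\<close>, so each
  component \<open>f\<^sub>i\<close> may be evaluated at the outer iterate \<open>x\<^sub>k\<close> at the price of a Lipschitz error;
  bounding the regularization terms crudely by \<open>2M\<^sub>h\<close>, nonexpansiveness of the projection gives
  \<open>\<gamma>\<^sub>k (f(x\<^sub>k) - f(z)) \<le> (\<parallel>x\<^sub>k - z\<parallel>\<^sup>2 - \<parallel>x\<^sub>k\<^sub>+\<^sub>1 - z\<parallel>\<^sup>2)/2 + (error terms)\<close> for every \<open>z \<in> X\<close>.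
  Multiplying by \<open>\<gamma>\<^sub>k\<^sup>r\<^sup>-\<^sup>1\<close>, which is nondecreasing in \<open>k\<close> because \<open>r < 1\<close>, the distance terms telescope
  to at most \<open>\<gamma>\<^sub>N\<^sub>-\<^sub>1\<^sup>r\<^sup>-\<^sup>1 (2M)\<^sup>2\<close>, and Jensen's inequality for the weighted average of the iterates concludes.
\<close>

lemma subdiff_nonempty:
  fixes f :: "'a::euclidean_space \<Rightarrow> real"
  assumes "convex_on UNIV f"
  shows "subdiff f x0 \<noteq> {}"
proof -
  let ?S = "{p :: 'a \<times> real. fst p = x0 \<and> snd p < f x0}"
  have "convex ?S"
    unfolding convex_def by (auto simp: convex_bound_lt scaleR_left_distrib[symmetric])
  moreover have "(x0, f x0 - 1) \<in> ?S" "(x0, f x0) \<in> epigraph UNIV f"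
    by (auto simp: epigraph_def)
  moreover have "?S \<inter> epigraph UNIV f = {}"
    by (auto simp: epigraph_def)
  ultimately obtain w b where w: "w \<noteq> 0" and wS: "\<forall>p\<in>?S. inner w p \<le> b"
    and wT: "\<forall>p\<in>epigraph UNIV f. inner w p \<ge> b"
    using separating_hyperplane_sets[OF _ convex_epigraphI[OF assms]] by blast
  obtain a c where wac: "w = (a, c)" by (cases w)
  have above: "inner a y + c * t \<ge> b" if "f y \<le> t" for y t
    using wT wac that by (auto simp: epigraph_def)
  have below: "inner a x0 + c * t \<le> b" if "t < f x0" for t
    using wS wac that by auto
  have "c > 0"
  proof (rule ccontr)
    assume "\<not> c > 0"
    moreover have "c \<ge> 0"
      using below[of "f x0 - 1"] above[of x0 "f x0"] by (simp add: algebra_simps)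
    ultimately have "c = 0" by simp
    then have "a \<noteq> 0" using w wac by (auto simp: zero_prod_def)
    moreover have "inner a (x0 - a) \<ge> b" "inner a x0 \<le> b"
      using above[of "x0 - a" "f (x0 - a)"] below[of "f x0 - 1"] \<open>c = 0\<close> by simp_all
    ultimately have "inner a a \<le> 0" by (simp add: inner_diff_right)
    with \<open>a \<noteq> 0\<close> show False by (metis inner_gt_zero_iff not_le)
  qed
  have at_x0: "inner a x0 + c * f x0 \<le> b"
  proof (rule ccontr)
    define d where "d = inner a x0 + c * f x0 - b"
    assume "\<not> ?thesis"
    then have "d > 0" by (simp add: d_def)
    have "c * (f x0 - d / (2 * c)) = c * f x0 - d / 2" using \<open>c > 0\<close> by (simp add: field_simps)
    moreover have "inner a x0 + c * (f x0 - d / (2 * c)) \<le> b"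
      using below \<open>d > 0\<close> \<open>c > 0\<close> by simp
    ultimately show False using \<open>d > 0\<close> d_def by linarith
  qed
  have "(- (1 / c)) *\<^sub>R a \<in> subdiff f x0"
    unfolding subdiff_def
  proof safe
    fix y
    have "c * f y \<ge> c * f x0 - inner a (y - x0)"
      using above[of y "f y"] at_x0 by (simp add: inner_diff_right)
    then show "f x0 + inner ((- (1 / c)) *\<^sub>R a) (y - x0) \<le> f y"
      using \<open>c > 0\<close> by (simp add: field_simps)
  qed
  then show ?thesis by blast
qed

lemma subdiff_le_inner:
  assumes "g \<in> subdiff f x"
  shows "f x - f z \<le> inner g (x - z)"
  using assms by (auto simp: subdiff_def inner_diff_right dest!: spec[of _ z])

lemma convex_on_diff_le_subdiff_bound:
  fixes f :: "'a::euclidean_space \<Rightarrow> real"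
  assumes "convex_on UNIV f" and "\<And>g. g \<in> subdiff f y \<Longrightarrow> norm g \<le> C"
  shows "f y - f z \<le> C * norm (y - z)"
proof -
  obtain g where g: "g \<in> subdiff f y" using subdiff_nonempty[OF assms(1)] by blast
  have "f y - f z \<le> inner g (y - z)" using subdiff_le_inner[OF g] .
  also have "\<dots> \<le> norm g * norm (y - z)" using norm_cauchy_schwarz by blast
  also have "\<dots> \<le> C * norm (y - z)" using assms(2)[OF g] by (simp add: mult_right_mono)
  finally show ?thesis .
qed

lemma norm_closest_point_step_le:
  fixes X :: "'a::euclidean_space set"
  assumes "convex X" "closed X" "z \<in> X"
  shows "(norm (closest_point X (y - t *\<^sub>R d) - z))\<^sup>2
    \<le> (norm (y - z))\<^sup>2 - 2 * t * inner d (y - z) + t\<^sup>2 * (norm d)\<^sup>2"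
proof -
  have "norm (closest_point X (y - t *\<^sub>R d) - z) \<le> norm ((y - z) - t *\<^sub>R d)"
    using closest_point_lipschitz[OF assms(1,2), of "y - t *\<^sub>R d" z] closest_point_self[OF assms(3)]
      assms(3) by (auto simp: dist_norm algebra_simps)
  then have "(norm (closest_point X (y - t *\<^sub>R d) - z))\<^sup>2 \<le> (norm ((y - z) - t *\<^sub>R d))\<^sup>2"
    by (simp add: power_mono)
  also have "\<dots> = (norm (y - z))\<^sup>2 - 2 * t * inner d (y - z) + t\<^sup>2 * (norm d)\<^sup>2"
    by (simp only: power2_norm_eq_inner)
      (simp add: inner_diff_left inner_diff_right inner_commute algebra_simps power2_eq_square)
  finally show ?thesis .
qed

lemma sum_weighted_telescope_le:
  fixes a D :: "nat \<Rightarrow> real"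
  assumes D: "\<And>k. 0 \<le> D k" "\<And>k. D k \<le> B" and a: "\<And>k. 0 \<le> a k" "\<And>k. a k \<le> a (Suc k)"
    and "n \<ge> 1"
  shows "(\<Sum>k<n. a k * (D k - D (Suc k))) \<le> a (n - 1) * B"
proof -
  \<comment> \<open>Each step adds \<open>(a\<^sub>n - a\<^sub>n\<^sub>-\<^sub>1) D\<^sub>n \<le> (a\<^sub>n - a\<^sub>n\<^sub>-\<^sub>1) B\<close> to the left-hand side of this invariant.\<close>
  have "(\<Sum>k<n. a k * (D k - D (Suc k))) + a (n - 1) * D n \<le> a (n - 1) * B"
    using \<open>n \<ge> 1\<close>
  proof (induction n rule: dec_induct)
    case base
    have "a 0 * D 0 \<le> a 0 * B" using D a by (simp add: mult_left_mono)
    then show ?case by (simp add: algebra_simps)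
  next
    case (step n)
    have "a (n - 1) \<le> a n" using a(2)[of "n - 1"] step(1) by simp
    then have "(a n - a (n - 1)) * D n \<le> (a n - a (n - 1)) * B" using D by (simp add: mult_left_mono)
    then show ?case using step.IH by (simp add: algebra_simps)
  qed
  moreover have "a (n - 1) * D n \<ge> 0" using a D by simp
  ultimately show ?thesis by linarith
qed

lemma convex_on_sum_fun:
  assumes "convex S" "\<And>i. i \<in> I \<Longrightarrow> convex_on S (F i)"
  shows "convex_on S (\<lambda>y. \<Sum>i\<in>I. F i y)"
  using assms
proof (induction I rule: infinite_finite_induct)
  case (insert i I)
  then show ?case by (simp add: convex_on_add)
qed (simp_all add: convex_on_const)

lemma convex_on_weighted_mean_le:
  fixes f :: "'a::real_vector \<Rightarrow> real"
  assumes "convex_on UNIV f" "finite A" "\<And>k. k \<in> A \<Longrightarrow> w k \<ge> 0" "sum w A > 0"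
  shows "f ((\<Sum>k\<in>A. w k *\<^sub>R y k) /\<^sub>R sum w A) - f z \<le> (\<Sum>k\<in>A. w k * (f (y k) - f z)) / sum w A"
proof -
  let ?S = "sum w A"
  have "A \<noteq> {}" using assms(4) by auto
  have "f ((\<Sum>k\<in>A. w k *\<^sub>R y k) /\<^sub>R ?S) = f (\<Sum>k\<in>A. (w k / ?S) *\<^sub>R y k)"
    by (simp add: scaleR_sum_right divide_inverse_commute)
  also have "\<dots> \<le> (\<Sum>k\<in>A. (w k / ?S) * f (y k))"
    using assms \<open>A \<noteq> {}\<close> by (intro convex_on_sum) (auto simp: sum_divide_distrib[symmetric])
  also have "\<dots> = (\<Sum>k\<in>A. w k * (f (y k) - f z)) / ?S + f z"
    using assms(4)
    by (simp add: sum_divide_distrib[symmetric] right_diff_distrib sum_subtractf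
        sum_distrib_right[symmetric] diff_divide_distrib)
  finally show ?thesis by simp
qed

locale ir_ig =
  fixes X :: "'a::euclidean_space set"
    and fs :: "nat \<Rightarrow> 'a \<Rightarrow> real" and h :: "'a \<Rightarrow> real"
    and m :: nat and Cf Ch Mh M :: real
    and gamma lambda :: "nat \<Rightarrow> real"
    and x :: "nat \<Rightarrow> 'a" and xi gf gh :: "nat \<Rightarrow> nat \<Rightarrow> 'a"
  assumes X: "X \<noteq> {}" "closed X" "convex X"
    and m: "m \<ge> 1"
    and fs_convex: "\<And>i. i \<in> {1..m} \<Longrightarrow> convex_on UNIV (fs i)"
    and Cf: "\<And>i y g. i \<in> {1..m} \<Longrightarrow> y \<in> X \<Longrightarrow> g \<in> subdiff (fs i) y \<Longrightarrow> norm g \<le> Cf"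
    and Ch: "\<And>y g. y \<in> X \<Longrightarrow> g \<in> subdiff h y \<Longrightarrow> norm g \<le> Ch"
    and gamma_pos: "\<And>k. gamma k > 0"
    and lambda_pos: "\<And>k. lambda k > 0"
    and x0: "x 0 \<in> X"
    and xi0: "\<And>k. xi k 0 = x k"
    and gf: "\<And>k i. i < m \<Longrightarrow> gf k i \<in> subdiff (fs (Suc i)) (xi k i)"
    and gh: "\<And>k i. i < m \<Longrightarrow> gh k i \<in> subdiff h (xi k i)"
    and step: "\<And>k i. i < m \<Longrightarrow> xi k (Suc i) =
       closest_point X (xi k i - gamma k *\<^sub>R (gf k i + (lambda k / real m) *\<^sub>R gh k i))"
    and next_iter: "\<And>k. x (Suc k) = xi k m"
    and Mh: "\<And>y. y \<in> X \<Longrightarrow> \<bar>h y\<bar> \<le> Mh"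
    and M: "\<And>y. y \<in> X \<Longrightarrow> norm y \<le> M"
begin

definition obj :: "'a \<Rightarrow> real" where
  "obj y = (\<Sum>i=1..m. fs i y)"

definition direction :: "nat \<Rightarrow> nat \<Rightarrow> 'a" where
  "direction k i = gf k i + (lambda k / real m) *\<^sub>R gh k i"

definition direction_bound :: "nat \<Rightarrow> real" where
  "direction_bound k = Cf + lambda k * Ch / real m"

definition inner_step_error :: "nat \<Rightarrow> real" where
  "inner_step_error k = 2 * (gamma k)\<^sup>2 * Cf * direction_bound k * real m + 4 * gamma k * lambda k * Mh / real m
    + (gamma k)\<^sup>2 * (direction_bound k)\<^sup>2"

definition error_coeff :: "nat \<Rightarrow> real" where
  "error_coeff k = real m * (Cf\<^sup>2 + (lambda k)\<^sup>2 * Ch\<^sup>2) + (real m)\<^sup>2 * Cf * (Cf + lambda k * Ch)"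

lemma convex_obj: "convex_on UNIV obj"
  unfolding obj_def[abs_def] by (intro convex_on_sum_fun fs_convex) auto

lemma xi_Suc: "i < m \<Longrightarrow> xi k (Suc i) = closest_point X (xi k i - gamma k *\<^sub>R direction k i)"
  by (simp add: step direction_def)

lemma xi_in_X_if_x_in_X: "x k \<in> X \<Longrightarrow> i \<le> m \<Longrightarrow> xi k i \<in> X"
  by (induction i) (auto simp: xi0 step closest_point_in_set X)

lemma x_in_X: "x k \<in> X"
  by (induction k) (auto simp: x0 next_iter xi_in_X_if_x_in_X)

lemma xi_in_X: "i \<le> m \<Longrightarrow> xi k i \<in> X"
  using x_in_X xi_in_X_if_x_in_X by blast

lemma Cf_nonneg: "Cf \<ge> 0"
proof -
  have "norm (gf 0 0) \<le> Cf" using Cf[of 1 "xi 0 0" "gf 0 0"] gf[of 0 0] xi_in_X[of 0 0] m by simp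
  then show ?thesis using norm_ge_zero order_trans by blast
qed

lemma Ch_nonneg: "Ch \<ge> 0"
proof -
  have "norm (gh 0 0) \<le> Ch" using Ch[of "xi 0 0" "gh 0 0"] gh[of 0 0] xi_in_X[of 0 0] m by simp
  then show ?thesis using norm_ge_zero order_trans by blast
qed

lemma norm_direction_le:
  assumes "i < m"
  shows "norm (direction k i) \<le> direction_bound k"
proof -
  have "norm (direction k i) \<le> norm (gf k i) + (lambda k / real m) * norm (gh k i)"
    using norm_triangle_ineq[of "gf k i" "(lambda k / real m) *\<^sub>R gh k i"] lambda_pos[of k]
    by (simp add: direction_def abs_of_nonneg)
  also have "\<dots> \<le> Cf + (lambda k / real m) * Ch"
    using Cf[OF _ xi_in_X gf] Ch[OF xi_in_X gh] assms lambda_pos[of k]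
    by (intro add_mono mult_left_mono) auto
  finally show ?thesis by (simp add: direction_bound_def)
qed

lemma xi_dist_x_le: "i \<le> m \<Longrightarrow> norm (xi k i - x k) \<le> real i * gamma k * direction_bound k"
proof (induction i)
  case (Suc i)
  have "norm (xi k (Suc i) - x k) \<le> norm ((xi k i - x k) - gamma k *\<^sub>R direction k i)"
    using closest_point_lipschitz[OF X(3,2,1), of "xi k i - gamma k *\<^sub>R direction k i" "x k"]
      closest_point_self[OF x_in_X] Suc.prems
    by (simp add: xi_Suc dist_norm algebra_simps)
  also have "\<dots> \<le> norm (xi k i - x k) + gamma k * norm (direction k i)"
    using norm_triangle_ineq4[of "xi k i - x k" "gamma k *\<^sub>R direction k i"] gamma_pos[of k] by simp
  also have "\<dots> \<le> real i * gamma k * direction_bound k + gamma k * direction_bound k"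
    using Suc norm_direction_le[of i k] gamma_pos[of k] by (intro add_mono mult_left_mono) auto
  finally show ?case by (simp add: algebra_simps)
qed (simp add: xi0)

lemma inner_direction_ge:
  assumes z: "z \<in> X" and i: "i < m"
  shows "inner (direction k i) (xi k i - z)
    \<ge> fs (Suc i) (x k) - fs (Suc i) z - Cf * (real m * gamma k * direction_bound k) - 2 * lambda k * Mh / real m"
proof -
  have xi: "xi k i \<in> X" using xi_in_X i by simp
  \<comment> \<open>Lipschitz continuity moves \<open>f\<^sub>i\<^sub>+\<^sub>1\<close> back to the outer iterate \<open>x\<^sub>k\<close>.\<close>
  have "fs (Suc i) (x k) - fs (Suc i) (xi k i) \<le> Cf * norm (x k - xi k i)"
    using i by (intro convex_on_diff_le_subdiff_bound fs_convex Cf[OF _ x_in_X]) auto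
  also have "\<dots> \<le> Cf * (real m * gamma k * direction_bound k)"
  proof -
    have "norm (x k - xi k i) \<le> real i * gamma k * direction_bound k"
      using xi_dist_x_le[of i k] i by (simp add: norm_minus_commute)
    also have "\<dots> \<le> real m * gamma k * direction_bound k"
      using i gamma_pos[of k] direction_bound_def Cf_nonneg Ch_nonneg lambda_pos[of k]
      by (intro mult_right_mono) auto
    finally show ?thesis using Cf_nonneg by (intro mult_left_mono)
  qed
  finally have f_part: "inner (gf k i) (xi k i - z)
      \<ge> fs (Suc i) (x k) - fs (Suc i) z - Cf * (real m * gamma k * direction_bound k)"
    using subdiff_le_inner[OF gf[OF i, of k], where z = z] by linarith
  have "inner (gh k i) (xi k i - z) \<ge> - 2 * Mh"
    using subdiff_le_inner[OF gh[OF i, of k], where z = z] Mh[OF xi] Mh[OF z] by linarith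
  then have "(lambda k / real m) * inner (gh k i) (xi k i - z) \<ge> (lambda k / real m) * (- 2 * Mh)"
    using lambda_pos[of k] by (intro mult_left_mono) auto
  then show ?thesis
    using f_part unfolding direction_def inner_add_left inner_scaleR_left by (simp add: field_simps)
qed

lemma inner_step_le:
  assumes z: "z \<in> X" and i: "i < m"
  shows "(norm (xi k (Suc i) - z))\<^sup>2
    \<le> (norm (xi k i - z))\<^sup>2 - 2 * gamma k * (fs (Suc i) (x k) - fs (Suc i) z) + inner_step_error k"
proof -
  have "(norm (xi k (Suc i) - z))\<^sup>2
      \<le> (norm (xi k i - z))\<^sup>2 - 2 * gamma k * inner (direction k i) (xi k i - z) + (gamma k)\<^sup>2 * (norm (direction k i))\<^sup>2"
    using norm_closest_point_step_le[OF X(3,2) z] by (simp add: xi_Suc[OF i])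
  moreover have "(gamma k)\<^sup>2 * (norm (direction k i))\<^sup>2 \<le> (gamma k)\<^sup>2 * (direction_bound k)\<^sup>2"
    using norm_direction_le[OF i] by (intro mult_left_mono power_mono) auto
  moreover have "2 * gamma k * inner (direction k i) (xi k i - z) \<ge> 2 * gamma k *
      (fs (Suc i) (x k) - fs (Suc i) z - Cf * (real m * gamma k * direction_bound k) - 2 * lambda k * Mh / real m)"
    using inner_direction_ge[OF z i] gamma_pos[of k] by (intro mult_left_mono) auto
  ultimately show ?thesis
    by (simp add: inner_step_error_def algebra_simps power2_eq_square)
qed

lemma obj_diff_eq_sum: "obj y - obj z = (\<Sum>i<m. fs (Suc i) y - fs (Suc i) z)"
  by (simp add: obj_def sum_subtractf sum.atLeast1_atMost_eq[simplified])

lemma outer_step_le: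
  assumes z: "z \<in> X"
  shows "(norm (x (Suc k) - z))\<^sup>2
    \<le> (norm (x k - z))\<^sup>2 - 2 * gamma k * (obj (x k) - obj z) + real m * inner_step_error k"
proof -
  have "(norm (xi k n - z))\<^sup>2 \<le> (norm (x k - z))\<^sup>2
      - 2 * gamma k * (\<Sum>i<n. fs (Suc i) (x k) - fs (Suc i) z) + real n * inner_step_error k"
    if "n \<le> m" for n
    using that
  proof (induction n)
    case (Suc n)
    then show ?case using inner_step_le[OF z, of n k] by (simp add: algebra_simps)
  qed (simp add: xi0)
  then show ?thesis using next_iter[of k] by (simp add: obj_diff_eq_sum)
qed

lemma inner_step_error_le:
  "real m * inner_step_error k \<le> 2 * ((gamma k)\<^sup>2 * error_coeff k + 2 * gamma k * lambda k * Mh)"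
proof -
  let ?g = "gamma k" and ?l = "lambda k" and ?E = "direction_bound k"
  have lCh: "0 \<le> ?l * Ch" using lambda_pos[of k] Ch_nonneg by simp
  then have lCh_m: "?l * Ch / real m \<le> ?l * Ch" using m by (simp add: divide_le_eq mult_le_cancel_left1)
  have "Cf * ?E \<le> Cf * (Cf + ?l * Ch)"
    using lCh_m Cf_nonneg by (intro mult_left_mono) (auto simp: direction_bound_def)
  then have "(2 * ?g\<^sup>2 * (real m)\<^sup>2) * (Cf * ?E) \<le> (2 * ?g\<^sup>2 * (real m)\<^sup>2) * (Cf * (Cf + ?l * Ch))"
    by (rule mult_left_mono) simp
  then have cross: "real m * (2 * ?g\<^sup>2 * Cf * ?E * real m) \<le> 2 * ?g\<^sup>2 * ((real m)\<^sup>2 * Cf * (Cf + ?l * Ch))"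
    by (simp add: algebra_simps power2_eq_square)
  have "(a + b)\<^sup>2 \<le> 2 * (a\<^sup>2 + b\<^sup>2)" for a b :: real
    using sum_squares_bound[of a b] by (simp add: power2_sum)
  then have "?E\<^sup>2 \<le> 2 * (Cf\<^sup>2 + (?l * Ch / real m)\<^sup>2)"
    unfolding direction_bound_def .
  also have "\<dots> \<le> 2 * (Cf\<^sup>2 + ?l\<^sup>2 * Ch\<^sup>2)"
    using power_mono[OF lCh_m, of 2] lCh by (simp add: power_mult_distrib)
  finally have "(real m * ?g\<^sup>2) * ?E\<^sup>2 \<le> (real m * ?g\<^sup>2) * (2 * (Cf\<^sup>2 + ?l\<^sup>2 * Ch\<^sup>2))"
    by (rule mult_left_mono) simp
  then have square: "real m * (?g\<^sup>2 * ?E\<^sup>2) \<le> 2 * ?g\<^sup>2 * (real m * (Cf\<^sup>2 + ?l\<^sup>2 * Ch\<^sup>2))"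
    by (simp add: algebra_simps)
  have "real m * (4 * ?g * ?l * Mh / real m) = 2 * (2 * ?g * ?l * Mh)" using m by simp
  with cross square show ?thesis by (simp add: inner_step_error_def error_coeff_def algebra_simps)
qed

lemma weighted_descent:
  assumes z: "z \<in> X"
  shows "gamma k powr r * (obj (x k) - obj z)
    \<le> gamma k powr (r - 1) * ((norm (x k - z))\<^sup>2 - (norm (x (Suc k) - z))\<^sup>2) / 2
      + gamma k powr (r + 1) * error_coeff k + 2 * Mh * (gamma k powr r * lambda k)"
proof -
  let ?g = "gamma k" and ?D = "(norm (x k - z))\<^sup>2 - (norm (x (Suc k) - z))\<^sup>2"
  let ?err = "?g\<^sup>2 * error_coeff k + 2 * ?g * lambda k * Mh"
  have half: "a \<le> c / 2 + b" if "2 * a \<le> c + 2 * b" for a b c :: real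
    using that by linarith
  have "2 * (?g * (obj (x k) - obj z)) \<le> ?D + real m * inner_step_error k"
    using outer_step_le[OF z, of k] unfolding mult.assoc by linarith
  also have "\<dots> \<le> ?D + 2 * ?err"
    using inner_step_error_le[of k] by (rule add_left_mono)
  finally have descent: "?g * (obj (x k) - obj z) \<le> ?D / 2 + ?err"
    by (rule half)
  have pow: "?g powr (r - 1) * ?g = ?g powr r" "?g powr (r - 1) * ?g\<^sup>2 = ?g powr (r + 1)"
    using gamma_pos[of k] powr_add[of ?g "r - 1" 1] powr_add[of ?g "r - 1" 2] by (simp_all add: add.commute)
  have "gamma k powr r * (obj (x k) - obj z) = ?g powr (r - 1) * (?g * (obj (x k) - obj z))"
    by (simp add: pow(1) flip: mult.assoc)
  also have "\<dots> \<le> ?g powr (r - 1) * (?D / 2 + ?err)"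
    using descent by (rule mult_left_mono) simp
  also have "\<dots> = ?g powr (r - 1) * ?D / 2 + (?g powr (r - 1) * ?g\<^sup>2) * error_coeff k
      + 2 * Mh * ((?g powr (r - 1) * ?g) * lambda k)"
    by (simp add: algebra_simps)
  finally show ?thesis unfolding pow .
qed

lemma weighted_regret_le:
  assumes gamma_dec: "decseq gamma" and r: "r < 1" and N: "N \<ge> 1" and z: "z \<in> X"
  shows "(\<Sum>k<N. gamma k powr r * (obj (x k) - obj z))
    \<le> real m * (\<Sum>k<N. gamma k powr (r + 1) * (Cf\<^sup>2 + (lambda k)\<^sup>2 * Ch\<^sup>2))
      + (real m)\<^sup>2 * Cf * (\<Sum>k<N. gamma k powr (r + 1) * (Cf + lambda k * Ch))
      + 2 * Mh * (\<Sum>k<N. gamma k powr r * lambda k)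
      + 2 * M\<^sup>2 * gamma (N - 1) powr (r - 1)"
proof -
  let ?D = "\<lambda>k. (norm (x k - z))\<^sup>2"
  have "norm (x k - z) \<le> 2 * M" for k
    using norm_triangle_ineq4[of "x k" z] M[OF x_in_X[of k]] M[OF z] by linarith
  then have D_le: "?D k \<le> 4 * M\<^sup>2" for k
    using power_mono[of "norm (x k - z)" "2 * M" 2] by (simp add: power_mult_distrib)
  \<comment> \<open>The weights \<open>\<gamma>\<^sub>k\<^sup>r\<^sup>-\<^sup>1\<close> are nondecreasing because \<open>r < 1\<close> and \<open>\<gamma>\<close> decreases.\<close>
  have "(\<Sum>k<N. gamma k powr (r - 1) * (?D k - ?D (Suc k))) \<le> gamma (N - 1) powr (r - 1) * (4 * M\<^sup>2)"
  proof (rule sum_weighted_telescope_le[OF _ D_le _ _ N])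
    show "gamma k powr (r - 1) \<le> gamma (Suc k) powr (r - 1)" for k
      using gamma_dec gamma_pos r by (intro powr_mono2') (auto simp: decseq_Suc_iff)
  qed simp_all
  moreover have "(\<Sum>k<N. gamma k powr r * (obj (x k) - obj z))
      \<le> (\<Sum>k<N. gamma k powr (r - 1) * (?D k - ?D (Suc k)) / 2
          + gamma k powr (r + 1) * error_coeff k + 2 * Mh * (gamma k powr r * lambda k))"
    by (intro sum_mono weighted_descent z)
  moreover have "(\<Sum>k<N. gamma k powr (r - 1) * (?D k - ?D (Suc k)) / 2
          + gamma k powr (r + 1) * error_coeff k + 2 * Mh * (gamma k powr r * lambda k))
      = (\<Sum>k<N. gamma k powr (r - 1) * (?D k - ?D (Suc k))) / 2
        + real m * (\<Sum>k<N. gamma k powr (r + 1) * (Cf\<^sup>2 + (lambda k)\<^sup>2 * Ch\<^sup>2))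
        + (real m)\<^sup>2 * Cf * (\<Sum>k<N. gamma k powr (r + 1) * (Cf + lambda k * Ch))
        + 2 * Mh * (\<Sum>k<N. gamma k powr r * lambda k)"
    by (simp add: error_coeff_def sum.distrib sum_distrib_left sum_divide_distrib algebra_simps)
  ultimately show ?thesis by (simp add: algebra_simps)
qed

end

theorem lemma6:
  fixes X :: "'a::euclidean_space set"
    and fs :: "nat \<Rightarrow> 'a \<Rightarrow> real" and h :: "'a \<Rightarrow> real"
    and m :: nat and mu_h Cf Ch Mh M r :: real
    and gamma lambda :: "nat \<Rightarrow> real"
    and x :: "nat \<Rightarrow> 'a" and xi :: "nat \<Rightarrow> nat \<Rightarrow> 'a"
    and gf gh :: "nat \<Rightarrow> nat \<Rightarrow> 'a"
    and N :: nat
  assumes X: "X \<noteq> {}" "compact X" "convex X"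
    and m: "m \<ge> 1"
    and fs_convex: "\<And>i. i \<in> {1..m} \<Longrightarrow> convex_on UNIV (fs i)"
    and h_sc: "mu_h > 0" "strongly_convex mu_h h"
    and Cf: "\<And>i y g. i \<in> {1..m} \<Longrightarrow> y \<in> X \<Longrightarrow> g \<in> subdiff (fs i) y \<Longrightarrow> norm g \<le> Cf"
    and Ch: "\<And>y g. y \<in> X \<Longrightarrow> g \<in> subdiff h y \<Longrightarrow> norm g \<le> Ch"
    and gamma: "\<And>k. gamma k > 0" "decseq gamma"
    and lambda: "\<And>k. lambda k > 0" "decseq lambda"
    and r: "r < 1"
    and x0: "x 0 \<in> X"
    and xi0: "\<And>k. xi k 0 = x k"
    and gf: "\<And>k i. i < m \<Longrightarrow> gf k i \<in> subdiff (fs (Suc i)) (xi k i)"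
    and gh: "\<And>k i. i < m \<Longrightarrow> gh k i \<in> subdiff h (xi k i)"
    and step: "\<And>k i. i < m \<Longrightarrow> xi k (Suc i) =
       closest_point X (xi k i - gamma k *\<^sub>R (gf k i + (lambda k / real m) *\<^sub>R gh k i))"
    and next_iter: "\<And>k. x (Suc k) = xi k m"
    and Mh: "\<And>y. y \<in> X \<Longrightarrow> \<bar>h y\<bar> \<le> Mh"
    and M: "\<And>y. y \<in> X \<Longrightarrow> norm y \<le> M"
    and N: "N \<ge> 1"
  shows "(let f = (\<lambda>y. \<Sum>i=1..m. fs i y);
              fstar = (INF y\<in>X. f y);
              S = (\<Sum>k<N. gamma k powr r);
              xbar = (\<Sum>k<N. gamma k powr r *\<^sub>R x k) /\<^sub>R S
          in f xbar - fstar \<le> (1 / S) *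
             (real m * (\<Sum>k<N. gamma k powr (r + 1) * (Cf\<^sup>2 + (lambda k)\<^sup>2 * Ch\<^sup>2))
              + (real m)\<^sup>2 * Cf * (\<Sum>k<N. gamma k powr (r + 1) * (Cf + lambda k * Ch))
              + 2 * Mh * (\<Sum>k<N. gamma k powr r * lambda k)
              + 2 * M\<^sup>2 * gamma (N - 1) powr (r - 1)))"
proof -
  interpret ir_ig X fs h m Cf Ch Mh M gamma lambda x xi gf gh
    using ir_ig.intro[OF X(1) compact_imp_closed[OF X(2)] X(3) m fs_convex Cf Ch gamma(1) lambda(1)
        x0 xi0 gf gh step next_iter Mh M] .
  define S where "S = (\<Sum>k<N. gamma k powr r)"
  define R where "R = real m * (\<Sum>k<N. gamma k powr (r + 1) * (Cf\<^sup>2 + (lambda k)\<^sup>2 * Ch\<^sup>2))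
      + (real m)\<^sup>2 * Cf * (\<Sum>k<N. gamma k powr (r + 1) * (Cf + lambda k * Ch))
      + 2 * Mh * (\<Sum>k<N. gamma k powr r * lambda k) + 2 * M\<^sup>2 * gamma (N - 1) powr (r - 1)"
  define xbar where "xbar = (\<Sum>k<N. gamma k powr r *\<^sub>R x k) /\<^sub>R S"
  have "S > 0"
    unfolding S_def using N gamma(1) by (intro sum_pos) (auto simp: less_imp_neq[symmetric] lessThan_empty_iff)
  have "obj xbar - R / S \<le> obj z" if "z \<in> X" for z
  proof -
    have "obj xbar - obj z \<le> (\<Sum>k<N. gamma k powr r * (obj (x k) - obj z)) / S"
      unfolding xbar_def S_def using \<open>S > 0\<close> S_def by (intro convex_on_weighted_mean_le convex_obj) auto
    also have "\<dots> \<le> R / S"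
      unfolding R_def using weighted_regret_le[OF gamma(2) r N that] \<open>S > 0\<close> by (simp add: divide_right_mono)
    finally show ?thesis by simp
  qed
  then have "obj xbar - R / S \<le> (INF y\<in>X. obj y)"
    using X(1) by (intro cINF_greatest)
  then show ?thesis
    unfolding Let_def obj_def[abs_def, symmetric] S_def[symmetric] xbar_def[symmetric] R_def[symmetric]
    by simp
qed

end
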